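(* Suppose that $\kappa$ satisfies Assumption A. Then there exists $\delta>0$ such that for any pairwise distinct points $s_1,s_2,s_3\in\mathbb{R}^2$ that are not co-linear and satisfy $\max_{i,j}|s_i-s_j|<\delta$, the Gaussian vector $(\Psi(s_1),\Psi(s_2),\Psi(s_3))$ has a non-degenerate distribution.
   Context: $\Psi:\mathbb{R}^2\to\mathbb{R}$ is a stationary centred Gaussian field with $\mathbb{E}[\Psi(s)^2]=1$ and correlation kernel $\kappa(s-t)=\mathbb{E}[\Psi(s)\Psi(t)]$. For a function $g$ and vector $v$, $g_v$ is the directional derivative. Assumption A: (1) $\kappa$ is $C^6$ at the origin; (2) $\kappa_{vv}(0)<0$ for all unit vectors $v\in S^1$. *)

theory Defs
  imports "HOL-Probability.Probability"
begin

definition dir_deriv :: "('a::real_normed_vector \<Rightarrow> real) \<Rightarrow> 'a \<Rightarrow> 'a \<Rightarrow> real" where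
  "dir_deriv g v x = frechet_derivative g (at x) v"

primrec Ck_on :: "nat \<Rightarrow> 'a::euclidean_space set \<Rightarrow> ('a \<Rightarrow> real) \<Rightarrow> bool" where
  "Ck_on 0 U f \<longleftrightarrow> continuous_on U f"
| "Ck_on (Suc k) U f \<longleftrightarrow> f differentiable_on U \<and> (\<forall>v. Ck_on k U (dir_deriv f v))"

definition assumption_A :: "(real^2 \<Rightarrow> real) \<Rightarrow> bool" where
  "assumption_A \<kappa> \<longleftrightarrow>
     (\<exists>U. open U \<and> 0 \<in> U \<and> Ck_on 6 U \<kappa>) \<and>
     (\<forall>v::real^2. norm v = 1 \<longrightarrow> dir_deriv (dir_deriv \<kappa> v) v 0 < 0)"

definition gaussian_rv :: "'a measure \<Rightarrow> ('a \<Rightarrow> real) \<Rightarrow> bool" where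
  "gaussian_rv M X \<longleftrightarrow>
     (\<exists>\<mu> \<sigma>. \<sigma> > 0 \<and> distributed M lborel X (normal_density \<mu> \<sigma>)) \<or>
     (\<exists>c. AE \<omega> in M. X \<omega> = c)"

(* Gaussian field: all values are random variables and every finite linear combination
   of values is Gaussian (i.e. all finite-dimensional distributions are jointly Gaussian). *)
definition gaussian_field :: "'a measure \<Rightarrow> ('t \<Rightarrow> 'a \<Rightarrow> real) \<Rightarrow> bool" where
  "gaussian_field M \<Psi> \<longleftrightarrow>
     (\<forall>t. \<Psi> t \<in> borel_measurable M) \<and>
     (\<forall>F c. finite F \<longrightarrow> gaussian_rv M (\<lambda>\<omega>. \<Sum>t\<in>F. c t * \<Psi> t \<omega>))"

definition covariance_matrix :: "'a measure \<Rightarrow> ('i::finite \<Rightarrow> 'a \<Rightarrow> real) \<Rightarrow> real^'i^'i" where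
  "covariance_matrix M X = (\<chi> i j. integral\<^sup>L M (\<lambda>\<omega>. X i \<omega> * X j \<omega>)
                                   - integral\<^sup>L M (X i) * integral\<^sup>L M (X j))"

(* A Gaussian random vector has a non-degenerate distribution iff its covariance matrix
   is non-singular. *)
definition nondegenerate_gaussian_vector :: "'a measure \<Rightarrow> ('i::finite \<Rightarrow> 'a \<Rightarrow> real) \<Rightarrow> bool" where
  "nondegenerate_gaussian_vector M X \<longleftrightarrow> det (covariance_matrix M X) \<noteq> 0"

end

theory Submission
  imports Defs
begin

text \<open>
  If the covariance matrix of \<open>(\<Psi> s\<^sub>1, \<Psi> s\<^sub>2, \<Psi> s\<^sub>3)\<close> is singular, some nontrivial
  combination of the three values vanishes almost surely, hence
  \<open>c\<^sub>1 \<kappa> t + c\<^sub>2 \<kappa> (t - x) + c\<^sub>3 \<kappa> (t - y) = 0\<close> for all \<open>t\<close>, where \<open>x = s\<^sub>1 - s\<^sub>2\<close> and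
  \<open>y = s\<^sub>1 - s\<^sub>3\<close>. Near the origin \<open>\<bar>\<kappa>\<bar> < 1\<close> off \<open>0\<close>, which forces all \<open>c\<^sub>i \<noteq> 0\<close>;
  eliminating between shifted copies of the relation then shows that \<open>x\<close>, \<open>y\<close> and \<open>y - x\<close>
  satisfy d'Alembert's equation \<open>\<kappa> (t + w) + \<kappa> (t - w) = 2 \<kappa> w \<kappa> t\<close>, and the equation
  propagates to the whole lattice spanned by \<open>x\<close> and \<open>y\<close>.

  For a reduced basis \<open>u, v\<close> of this lattice the equation gives
  \<open>(\<kappa> (u + v) - \<kappa> u \<kappa> v)\<^sup>2 = (1 - \<kappa> u\<^sup>2) (1 - \<kappa> v\<^sup>2)\<close>. Inserting the Taylor expansion
  \<open>\<kappa> z = 1 - Q z / 2 + o(\<bar>z\<bar>\<^sup>2)\<close>, where \<open>Q\<close> is minus the Hessian of \<open>\<kappa>\<close> at \<open>0\<close> and is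
  positive definite by Assumption A, yields \<open>Q u Q v - B(u, v)\<^sup>2 = o(\<bar>v\<bar>\<^sup>4)\<close>. But this
  quantity equals \<open>det Q \<cdot> det(u, v)\<^sup>2\<close>, which is at least a fixed multiple of
  \<open>\<bar>v\<bar>\<^sup>4\<close> because the basis is reduced: a contradiction once the triangle is small.
\<close>

section \<open>Directional derivatives and the second-order Taylor expansion\<close>

lemma Ck_on_Suc_D: "Ck_on (Suc k) U f \<Longrightarrow> Ck_on k U f"
  by (induction k arbitrary: f) (simp_all add: differentiable_imp_continuous_on)

lemma Ck_on_mono: "j \<le> k \<Longrightarrow> Ck_on k U f \<Longrightarrow> Ck_on j U f"
  by (induction k) (simp, metis Ck_on_Suc_D le_Suc_eq)

lemma has_derivative_dir_deriv:
  fixes f :: "'a::real_normed_vector \<Rightarrow> real"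
  assumes "f differentiable (at p)"
  shows "(f has_derivative (\<lambda>h. dir_deriv f h p)) (at p)"
  using frechet_derivative_works[of f "at p"] assms by (simp add: dir_deriv_def)

lemma
  fixes f :: "'a::real_normed_vector \<Rightarrow> real"
  assumes "f differentiable (at p)"
  shows dir_deriv_add: "dir_deriv f (a + b) p = dir_deriv f a p + dir_deriv f b p"
    and dir_deriv_scaleR: "dir_deriv f (c *\<^sub>R a) p = c * dir_deriv f a p"
  using linear_frechet_derivative[OF assms] unfolding dir_deriv_def
  by (simp_all add: linear_add linear_scale)

lemma has_real_derivative_dir_deriv_ray:
  fixes f :: "'a::real_normed_vector \<Rightarrow> real"
  assumes "f differentiable (at (r *\<^sub>R z))"
  shows "((\<lambda>r. f (r *\<^sub>R z)) has_real_derivative dir_deriv f z (r *\<^sub>R z)) (at r)"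
proof -
  have "((\<lambda>r. f (r *\<^sub>R z)) has_derivative (\<lambda>h. dir_deriv f (h *\<^sub>R z) (r *\<^sub>R z))) (at r)"
    using has_derivative_compose[OF bounded_linear_imp_has_derivative[OF bounded_linear_scaleR_left]
        has_derivative_dir_deriv[OF assms]] .
  then show ?thesis
    using dir_deriv_scaleR[OF assms] by (simp add: has_field_derivative_def mult_commute_abs)
qed

lemma dir_deriv_even_at_0:
  fixes f :: "'a::real_normed_vector \<Rightarrow> real"
  assumes "f differentiable (at 0)" and even: "\<And>z. f (-z) = f z"
  shows "dir_deriv f z 0 = 0"
proof -
  define D where "D = dir_deriv f z 0"
  have D: "((\<lambda>r. f (r *\<^sub>R z)) has_real_derivative D) (at 0)"
    using has_real_derivative_dir_deriv_ray[of f 0 z] assms(1) unfolding D_def by simp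
  have "((\<lambda>r. f ((- r) *\<^sub>R z)) has_real_derivative - D) (at 0)"
    using DERIV_mirror[of "\<lambda>r. f (r *\<^sub>R z)" D 0] D by simp
  moreover have "(\<lambda>r. f ((- r) *\<^sub>R z)) = (\<lambda>r. f (r *\<^sub>R z))"
    using even by (metis scaleR_minus_left)
  ultimately have "D = - D" using D DERIV_unique by fastforce
  then show ?thesis unfolding D_def by simp
qed

lemma dir_deriv_coordinates:
  fixes f :: "real^2 \<Rightarrow> real"
  assumes "f differentiable (at p)"
  shows "dir_deriv f z p = z$1 * dir_deriv f (axis 1 1) p + z$2 * dir_deriv f (axis 2 1) p"
proof -
  have "z$1 *\<^sub>R axis 1 1 + z$2 *\<^sub>R axis 2 1 = z"
    by (simp add: vec_eq_iff forall_2 axis_def)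
  then have "dir_deriv f z p = dir_deriv f (z$1 *\<^sub>R axis 1 1 + z$2 *\<^sub>R axis 2 1) p"
    by simp
  then show ?thesis
    by (simp only: dir_deriv_add[OF assms] dir_deriv_scaleR[OF assms])
qed

definition partial2 :: "(real^2 \<Rightarrow> real) \<Rightarrow> 2 \<Rightarrow> 2 \<Rightarrow> real^2 \<Rightarrow> real" where
  "partial2 f i j p = dir_deriv (dir_deriv f (axis i 1)) (axis j 1) p"

lemma second_dir_deriv_coordinates:
  fixes f :: "real^2 \<Rightarrow> real"
  assumes U: "open U" "p \<in> U" and "f differentiable_on U"
    and "\<And>v. dir_deriv f v differentiable_on U"
  shows "dir_deriv (dir_deriv f z) w p =
     (\<Sum>i\<in>UNIV. \<Sum>j\<in>UNIV. z$i * w$j * partial2 f i j p)"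
proof -
  define g where "g i = dir_deriv f (axis i 1)" for i
  have f_at: "\<And>q. q \<in> U \<Longrightarrow> f differentiable (at q)"
    and g_at: "\<And>i. g i differentiable (at p)"
    using assms differentiable_on_eq_differentiable_at unfolding g_def by blast+
  have "((\<lambda>q. z$1 * g 1 q + z$2 * g 2 q) has_derivative
       (\<lambda>h. z$1 * dir_deriv (g 1) h p + z$2 * dir_deriv (g 2) h p)) (at p)"
    by (intro has_derivative_add has_derivative_mult_right has_derivative_dir_deriv g_at)
  then have "(dir_deriv f z has_derivative
       (\<lambda>h. z$1 * dir_deriv (g 1) h p + z$2 * dir_deriv (g 2) h p)) (at p)"
    by (rule has_derivative_transform_within_open[OF _ U])
      (unfold g_def, rule dir_deriv_coordinates[OF f_at, symmetric])
  then have "frechet_derivative (dir_deriv f z) (at p) =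
      (\<lambda>h. z$1 * dir_deriv (g 1) h p + z$2 * dir_deriv (g 2) h p)"
    by (rule frechet_derivative_at[symmetric])
  then have "dir_deriv (dir_deriv f z) w p = z$1 * dir_deriv (g 1) w p + z$2 * dir_deriv (g 2) w p"
    by (simp add: dir_deriv_def)
  then show ?thesis
    unfolding partial2_def g_def[symmetric]
    using dir_deriv_coordinates[OF g_at, where z=w] by (simp add: sum_2 algebra_simps)
qed

lemma second_dir_deriv_near_0:
  fixes k :: "real^2 \<Rightarrow> real"
  assumes U: "open U" "0 \<in> U" and C2: "Ck_on 2 U k" and "\<eta> > 0"
  obtains r where "r > 0" "\<And>p. norm p < r \<Longrightarrow> p \<in> U"
    "\<And>p z. norm p < r \<Longrightarrow>
       \<bar>dir_deriv (dir_deriv k z) z p - dir_deriv (dir_deriv k z) z 0\<bar> \<le> \<eta> * (norm z)^2"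
proof -
  have d1: "k differentiable_on U" and d2: "\<And>v. dir_deriv k v differentiable_on U"
    and cont: "\<And>v w. continuous_on U (dir_deriv (dir_deriv k v) w)"
    using C2 by (simp_all add: numeral_2_eq_2)
  have "\<forall>\<^sub>F p in nhds 0. \<bar>partial2 k i j p - partial2 k i j 0\<bar> < \<eta>/4" for i j
  proof -
    have "(partial2 k i j \<longlongrightarrow> partial2 k i j 0) (nhds 0)"
      using cont U continuous_on_eq_continuous_at tendsto_at_iff_tendsto_nhds
      unfolding partial2_def isCont_def by blast
    then show ?thesis
      using \<open>\<eta> > 0\<close> by (auto simp: tendsto_iff dist_real_def dest: spec[of _ "\<eta>/4"])
  qed
  then have "\<forall>\<^sub>F p in nhds 0. p \<in> U \<and> (\<forall>i j. \<bar>partial2 k i j p - partial2 k i j 0\<bar> < \<eta>/4)"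
    using eventually_nhds_in_open[OF U] by (auto intro!: eventually_conj eventually_all_finite)
  then obtain r where "r > 0"
    and r: "\<And>p. norm p < r \<Longrightarrow> p \<in> U \<and> (\<forall>i j. \<bar>partial2 k i j p - partial2 k i j 0\<bar> < \<eta>/4)"
    unfolding eventually_nhds_metric by (auto simp: dist_norm)
  have "\<bar>dir_deriv (dir_deriv k z) z p - dir_deriv (dir_deriv k z) z 0\<bar> \<le> \<eta> * (norm z)^2"
    if "norm p < r" for p z
  proof -
    have bound: "\<bar>z$i * z$j * (partial2 k i j p - partial2 k i j 0)\<bar> \<le> (norm z)^2 * (\<eta>/4)" for i j
    proof -
      have "\<bar>z$i * z$j\<bar> \<le> (norm z)^2"
        using mult_mono[OF component_le_norm_cart component_le_norm_cart]
        by (simp add: abs_mult power2_eq_square)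
      then show ?thesis
        unfolding abs_mult[of "z$i * z$j"] using r[OF that] by (intro mult_mono) (auto intro: less_imp_le)
    qed
    have "p \<in> U" using r[OF that] by blast
    have "dir_deriv (dir_deriv k z) z p - dir_deriv (dir_deriv k z) z 0
        = (\<Sum>i\<in>UNIV. \<Sum>j\<in>UNIV. z$i * z$j * (partial2 k i j p - partial2 k i j 0))"
      unfolding second_dir_deriv_coordinates[OF U(1) \<open>p \<in> U\<close> d1 d2]
        second_dir_deriv_coordinates[OF U d1 d2]
      by (simp add: sum_2 algebra_simps)
    also have "\<bar>\<dots>\<bar> \<le> (\<Sum>i\<in>(UNIV::2 set). \<Sum>j\<in>(UNIV::2 set). (norm z)^2 * (\<eta>/4))"
      by (rule order_trans[OF sum_abs sum_mono], rule order_trans[OF sum_abs sum_mono], rule bound)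
    finally show ?thesis by (simp add: mult_ac)
  qed
  then show ?thesis using that \<open>r > 0\<close> r by blast
qed

lemma second_order_mean_value_even:
  fixes k :: "real^2 \<Rightarrow> real"
  assumes "\<And>t. 0 \<le> t \<Longrightarrow> t \<le> 1 \<Longrightarrow> t *\<^sub>R z \<in> U" and "open U"
    and "k differentiable_on U" "\<And>v. dir_deriv k v differentiable_on U"
    and even: "\<And>z. k (-z) = k z"
  obtains t where "0 < t" "t < 1" "k z = k 0 + dir_deriv (dir_deriv k z) z (t *\<^sub>R z) / 2"
proof -
  have k_at: "k differentiable (at q)" and dk_at: "dir_deriv k v differentiable (at q)" if "q \<in> U" for q v
    using assms(2-4) that differentiable_on_eq_differentiable_at by blast+
  define diff where "diff = (\<lambda>(m::nat) t. if m = 0 then k (t *\<^sub>R z) else if m = 1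
      then dir_deriv k z (t *\<^sub>R z) else dir_deriv (dir_deriv k z) z (t *\<^sub>R z))"
  have "\<forall>m t. m < 2 \<and> 0 \<le> t \<and> t \<le> 1 \<longrightarrow> DERIV (diff m) t :> diff (Suc m) t"
  proof (intro allI impI)
    fix m :: nat and t :: real assume "m < 2 \<and> 0 \<le> t \<and> t \<le> 1"
    then have "m < 2" "t *\<^sub>R z \<in> U" using assms(1) by auto
    then show "DERIV (diff m) t :> diff (Suc m) t"
      using has_real_derivative_dir_deriv_ray[OF k_at] has_real_derivative_dir_deriv_ray[OF dk_at]
      by (auto simp: diff_def less_2_cases_iff)
  qed
  then obtain t where "0 < t" "t < 1"
    and "diff 0 1 = (\<Sum>m<2. diff m 0 / fact m * 1 ^ m) + diff 2 t / fact 2 * 1 ^ 2"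
    using Maclaurin[of 1 2 diff "diff 0", OF _ _ refl] by auto
  moreover have "0 \<in> U" using assms(1)[of 0] by simp
  then have "dir_deriv k z 0 = 0"
    using dir_deriv_even_at_0[where f = k, OF k_at even] by blast
  ultimately show ?thesis
    using that by (simp add: diff_def numeral_2_eq_2)
qed

lemma second_order_taylor_even:
  fixes k :: "real^2 \<Rightarrow> real"
  assumes U: "open U" "0 \<in> U" and C2: "Ck_on 2 U k" and even: "\<And>z. k (-z) = k z"
    and "\<eta> > 0"
  shows "\<exists>r>0. \<forall>z. norm z < r \<longrightarrow>
           \<bar>k z - k 0 - dir_deriv (dir_deriv k z) z 0 / 2\<bar> \<le> \<eta> * (norm z)^2"
proof -
  obtain r where "r > 0" and r_U: "\<And>p. norm p < r \<Longrightarrow> p \<in> U"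
    and close: "\<And>p z. norm p < r \<Longrightarrow>
       \<bar>dir_deriv (dir_deriv k z) z p - dir_deriv (dir_deriv k z) z 0\<bar> \<le> \<eta> * (norm z)^2"
    using second_dir_deriv_near_0[OF U C2 \<open>\<eta> > 0\<close>] by blast
  have "\<bar>k z - k 0 - dir_deriv (dir_deriv k z) z 0 / 2\<bar> \<le> \<eta> * (norm z)^2" if "norm z < r" for z
  proof -
    have "t *\<^sub>R z \<in> U" if "0 \<le> t" "t \<le> 1" for t
      using r_U that \<open>norm z < r\<close> mult_left_le_one_le[of "norm z" t] by simp
    moreover have "k differentiable_on U" "\<And>v. dir_deriv k v differentiable_on U"
      using C2 by (simp_all add: numeral_2_eq_2)
    ultimately obtain t where "0 < t" "t < 1"
      and "k z = k 0 + dir_deriv (dir_deriv k z) z (t *\<^sub>R z) / 2"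
      using second_order_mean_value_even[where k = k and z = z, OF _ U(1) _ _ even] by blast
    moreover have "norm (t *\<^sub>R z) < r"
      using \<open>0 < t\<close> \<open>t < 1\<close> \<open>norm z < r\<close> mult_left_le_one_le[of "norm z" t] by simp
    ultimately show ?thesis
      using close[of "t *\<^sub>R z" z] \<open>\<eta> > 0\<close> by (simp add: abs_le_iff)
  qed
  then show ?thesis using \<open>r > 0\<close> by blast
qed

section \<open>Planar determinants and lattices\<close>

definition det2 :: "real^2 \<Rightarrow> real^2 \<Rightarrow> real" where
  "det2 a b = a$1 * b$2 - a$2 * b$1"

lemma inner_vec2: "a \<bullet> b = a$1 * b$1 + a$2 * b$2" for a b :: "real^2"
  by (simp add: inner_vec_def sum_2)

lemma norm_vec2_sq: "(norm a)^2 = (a$1)^2 + (a$2)^2" for a :: "real^2"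
  by (simp only: power2_norm_eq_inner inner_vec2) (simp add: power2_eq_square)

lemma det2_sq_add_inner_sq: "(det2 a b)^2 + (a \<bullet> b)^2 = (norm a)^2 * (norm b)^2"
  by (simp only: norm_vec2_sq det2_def inner_vec2) (simp add: power2_eq_square algebra_simps)

lemma det2_sq_le: "(det2 a b)^2 \<le> (norm a)^2 * (norm b)^2"
  using det2_sq_add_inner_sq[of a b] zero_le_power2[of "a \<bullet> b"] by linarith

lemma abs_det2_le: "\<bar>det2 a b\<bar> \<le> norm a * norm b"
  using det2_sq_le[of a b] abs_le_square_iff[of "det2 a b" "norm a * norm b"]
  by (simp add: power_mult_distrib)

lemma det2_simps [simp]:
  "det2 a (c *\<^sub>R b) = c * det2 a b" "det2 (c *\<^sub>R a) b = c * det2 a b"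
  "det2 a (b + b') = det2 a b + det2 a b'" "det2 (a + a') b = det2 a b + det2 a' b"
  "det2 a (b - b') = det2 a b - det2 a b'" "det2 (a - a') b = det2 a b - det2 a' b"
  "det2 a a = 0" "det2 a 0 = 0" "det2 0 b = 0"
  by (simp_all add: det2_def algebra_simps)

lemma det2_eq_0_trans:
  assumes "b \<noteq> 0" "det2 b x = 0" "det2 b y = 0"
  shows "det2 x y = 0"
proof -
  have "(norm b)^2 * det2 x y = det2 b y * (b \<bullet> x) - det2 b x * (b \<bullet> y)"
    by (simp only: norm_vec2_sq det2_def inner_vec2) (simp add: power2_eq_square algebra_simps)
  then show ?thesis using assms by simp
qed

lemma det2_eq_0_imp_collinear:
  assumes "det2 (p - q) (p - r) = 0"
  shows "collinear {p, q, r}"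
proof -
  define x where "x = q - p"
  define y where "y = r - p"
  have D: "x$1 * y$2 - x$2 * y$1 = 0"
    using assms unfolding x_def y_def det2_def by (simp add: algebra_simps)
  have "(norm x)^2 * y$i = (x \<bullet> y) * x$i" for i
  proof -
    have "(norm x)^2 * y$1 - (x \<bullet> y) * x$1 = - x$2 * (x$1 * y$2 - x$2 * y$1)"
      and "(norm x)^2 * y$2 - (x \<bullet> y) * x$2 = x$1 * (x$1 * y$2 - x$2 * y$1)"
      by (simp_all only: norm_vec2_sq inner_vec2) (simp_all add: power2_eq_square algebra_simps)
    then show ?thesis using D exhaust_2[of i] by auto
  qed
  then have "x = 0 \<or> y = ((x \<bullet> y) / (norm x)^2) *\<^sub>R x"
    by (cases "x = 0") (simp_all add: vec_eq_iff field_simps)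
  then have "collinear {0, x, y}" unfolding collinear_lemma by blast
  then show ?thesis
    using collinear_3[of q p r] unfolding x_def y_def by (simp add: insert_commute)
qed

definition lattice2 :: "real^2 \<Rightarrow> real^2 \<Rightarrow> (real^2) set" where
  "lattice2 x y = {of_int n *\<^sub>R x + of_int m *\<^sub>R y | n m. True}"

lemma lattice2_add: "a \<in> lattice2 x y \<Longrightarrow> b \<in> lattice2 x y \<Longrightarrow> a + b \<in> lattice2 x y"
proof -
  assume "a \<in> lattice2 x y" "b \<in> lattice2 x y"
  then obtain n m n' m' where "a = of_int n *\<^sub>R x + of_int m *\<^sub>R y" "b = of_int n' *\<^sub>R x + of_int m' *\<^sub>R y"
    unfolding lattice2_def by blast
  then have "a + b = of_int (n + n') *\<^sub>R x + of_int (m + m') *\<^sub>R y"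
    by (simp add: algebra_simps)
  then show ?thesis unfolding lattice2_def by blast
qed

lemma lattice2_scale: "a \<in> lattice2 x y \<Longrightarrow> of_int j *\<^sub>R a \<in> lattice2 x y"
proof -
  assume "a \<in> lattice2 x y"
  then obtain n m where "a = of_int n *\<^sub>R x + of_int m *\<^sub>R y"
    unfolding lattice2_def by blast
  then have "of_int j *\<^sub>R a = of_int (j * n) *\<^sub>R x + of_int (j * m) *\<^sub>R y"
    by (simp add: algebra_simps)
  then show ?thesis unfolding lattice2_def by blast
qed

lemma lattice2_diff: "a \<in> lattice2 x y \<Longrightarrow> b \<in> lattice2 x y \<Longrightarrow> a - b \<in> lattice2 x y"
  using lattice2_add[of a x y "of_int (-1) *\<^sub>R b"] lattice2_scale[of b x y "-1"] by simp

lemma lattice2_generators: "x \<in> lattice2 x y" "y \<in> lattice2 x y"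
  unfolding lattice2_def by (rule CollectI, rule exI[of _ 1], rule exI[of _ 0], simp,
    rule CollectI, rule exI[of _ 0], rule exI[of _ 1], simp)
lemma lattice2_finite_ball:
  assumes D: "det2 x y \<noteq> 0"
  shows "finite {z \<in> lattice2 x y. norm z \<le> r}"
proof -
  define N where "N = ceiling (r * (norm x + norm y) / \<bar>det2 x y\<bar>)"
  have coeff: "\<bar>n\<bar> \<le> N" if "\<bar>det2 x y\<bar> * \<bar>of_int n\<bar> \<le> r * (norm x + norm y)" for n
  proof -
    have "\<bar>real_of_int n\<bar> \<le> r * (norm x + norm y) / \<bar>det2 x y\<bar>"
      using that D by (simp add: field_simps)
    then show ?thesis unfolding N_def by linarith
  qed
  have "{z \<in> lattice2 x y. norm z \<le> r} \<subseteq>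
      (\<lambda>(n, m). of_int n *\<^sub>R x + of_int m *\<^sub>R y) ` ({-N..N} \<times> {-N..N})"
  proof
    fix z assume "z \<in> {z \<in> lattice2 x y. norm z \<le> r}"
    then obtain n m where z: "z = of_int n *\<^sub>R x + of_int m *\<^sub>R y" and zr: "norm z \<le> r"
      unfolding lattice2_def by auto
    have "0 \<le> r * norm x" "0 \<le> r * norm y"
      using order_trans[OF norm_ge_zero zr] by simp_all
    then have "norm z * norm y \<le> r * (norm x + norm y)" "norm x * norm z \<le> r * (norm x + norm y)"
      using mult_right_mono[OF zr, of "norm y"] mult_left_mono[OF zr, of "norm x"]
      by (simp_all add: algebra_simps)
    moreover have "det2 z y = of_int n * det2 x y" "det2 x z = of_int m * det2 x y"
      unfolding z by simp_all
    ultimately have "\<bar>n\<bar> \<le> N" "\<bar>m\<bar> \<le> N"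
      using abs_det2_le[of z y] abs_det2_le[of x z]
      by (auto intro!: coeff simp: abs_mult mult.commute)
    then show "z \<in> (\<lambda>(n, m). of_int n *\<^sub>R x + of_int m *\<^sub>R y) ` ({-N..N} \<times> {-N..N})"
      using z by (auto intro!: image_eqI[of _ _ "(n, m)"])
  qed
  then show ?thesis by (rule finite_subset) auto
qed

lemma lattice2_shortest_vector:
  assumes D: "det2 x y \<noteq> 0"
  obtains b where "b \<in> lattice2 x y" "b \<noteq> 0"
    "\<And>z. z \<in> lattice2 x y \<Longrightarrow> z \<noteq> 0 \<Longrightarrow> norm b \<le> norm z"
proof -
  define P where "P = {z \<in> lattice2 x y. norm z \<le> norm x} - {0}"
  have "finite (norm ` P)" unfolding P_def using lattice2_finite_ball[OF D, of "norm x"] by simp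
  moreover have xP: "x \<in> P" unfolding P_def using lattice2_generators D by auto
  moreover have "norm ` P \<noteq> {}" using xP by blast
  ultimately obtain b where bP: "b \<in> P" and b_min: "norm b = Min (norm ` P)"
    using Min_in[of "norm ` P"] by fastforce
  show ?thesis
  proof
    show "b \<in> lattice2 x y" "b \<noteq> 0" using bP unfolding P_def by auto
    fix z assume "z \<in> lattice2 x y" "z \<noteq> 0"
    then show "norm b \<le> norm z"
      using \<open>finite (norm ` P)\<close> xP unfolding b_min P_def
      by (cases "norm z \<le> norm x") (auto intro: order_trans[OF Min_le])
  qed
qed

lemma abs_inner_round_reduce_le:
  fixes w b :: "'a::real_inner"
  shows "\<bar>(w - of_int (round ((w \<bullet> b) / (norm b)^2)) *\<^sub>R b) \<bullet> b\<bar> \<le> (norm b)^2 / 2"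
proof (cases "b = 0")
  case False
  define q where "q = (w \<bullet> b) / (norm b)^2"
  have "(w - of_int (round q) *\<^sub>R b) \<bullet> b = (norm b)^2 * (q - of_int (round q))"
    using False unfolding q_def by (simp add: inner_diff_left power2_norm_eq_inner field_simps)
  also have "\<bar>\<dots>\<bar> = (norm b)^2 * \<bar>q - of_int (round q)\<bar>"
    by (simp add: abs_mult)
  also have "\<dots> \<le> (norm b)^2 * (1/2)"
    using of_int_round_abs_le[of q] by (intro mult_left_mono) (simp_all add: abs_minus_commute)
  finally show ?thesis unfolding q_def by simp
qed simp

lemma exists_int_multiple_norm_between:
  fixes b v :: "'a::real_normed_vector"
  assumes "b \<noteq> 0" "norm b \<le> norm v"
  obtains j :: int where "norm (of_int j *\<^sub>R b) \<le> norm v" "norm v \<le> 2 * norm (of_int j *\<^sub>R b)"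
proof -
  define j where "j = floor (norm v / norm b)"
  have "0 < norm b" "1 \<le> norm v / norm b" using assms by auto
  then have "1 \<le> j" unfolding j_def by (simp add: le_floor_iff)
  have "of_int j \<le> norm v / norm b" "norm v / norm b < of_int j + 1"
    unfolding j_def by linarith+
  then have "of_int j * norm b \<le> norm v" "norm v < of_int j * norm b + norm b"
    using \<open>0 < norm b\<close> by (simp_all add: field_simps)
  moreover have "norm b \<le> of_int j * norm b"
    using \<open>1 \<le> j\<close> \<open>0 < norm b\<close> by simp
  ultimately have "of_int j * norm b \<le> norm v" "norm v \<le> 2 * (of_int j * norm b)"
    by linarith+
  moreover have "norm (of_int j *\<^sub>R b) = of_int j * norm b"
    using \<open>1 \<le> j\<close> by simp
  ultimately show ?thesis
    using that[of j] by metis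
qed

lemma det2_sq_lower_if_size_reduced:
  assumes "norm b \<le> norm v" and "\<bar>b \<bullet> v\<bar> \<le> (norm b)^2 / 2"
  shows "3/4 * (norm b)^2 * (norm v)^2 \<le> (det2 b v)^2"
proof -
  have "(b \<bullet> v)^2 \<le> ((norm b)^2 / 2)^2"
    using power_mono[OF assms(2) abs_ge_zero, of 2] by simp
  moreover have "(norm b)^2 * (norm b)^2 \<le> (norm b)^2 * (norm v)^2"
    using assms(1) by (intro mult_left_mono power_mono) auto
  ultimately show ?thesis
    using det2_sq_add_inner_sq[of b v] by (simp add: power2_eq_square)
qed

lemma norm_sq_le_if_size_reduced:
  assumes "norm b \<le> norm w" "det2 b v = det2 b w" "\<bar>b \<bullet> v\<bar> \<le> (norm b)^2 / 2" "b \<noteq> 0"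
  shows "(norm v)^2 \<le> 5/4 * (norm w)^2"
proof -
  have "(b \<bullet> v)^2 \<le> ((norm b)^2 / 2)^2"
    using power_mono[OF assms(3) abs_ge_zero, of 2] by simp
  also have "\<dots> \<le> (norm b)^2 / 4 * (norm w)^2"
    using assms(1) by (simp add: power2_eq_square mult_mono)
  finally have "(norm b)^2 * (norm v)^2 \<le> (norm b)^2 * (5/4 * (norm w)^2)"
    using det2_sq_add_inner_sq[of b v] det2_sq_le[of b w] assms(2) by (simp add: algebra_simps)
  then show ?thesis using \<open>b \<noteq> 0\<close> by simp
qed

lemma det2_sq_lower_if_comparable:
  assumes "3/4 * (norm u)^2 * (norm v)^2 \<le> (det2 u v)^2" "norm v \<le> 2 * norm u"
  shows "3/16 * (norm v)^4 \<le> (det2 u v)^2"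
proof -
  have "(norm v)^2 \<le> 4 * (norm u)^2"
    using power_mono[OF assms(2), of 2] by (simp add: power_mult_distrib)
  then have "3/16 * (norm v)^4 \<le> 3/4 * (norm u)^2 * (norm v)^2"
    using mult_right_mono[of "(norm v)^2" "4 * (norm u)^2" "(norm v)^2"]
    by (simp add: power4_eq_xxxx power2_eq_square algebra_simps)
  then show ?thesis using assms(1) by linarith
qed

lemma lattice2_reduced_pair:
  assumes D: "det2 x y \<noteq> 0"
  obtains u v where "u \<in> lattice2 x y" "v \<in> lattice2 x y" "v \<noteq> 0" "norm u \<le> norm v"
    "(norm v)^2 \<le> 5/4 * max ((norm x)^2) ((norm y)^2)" "3/16 * (norm v)^4 \<le> (det2 u v)^2"
proof -
  obtain b where bL: "b \<in> lattice2 x y" and "b \<noteq> 0"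
    and b_min: "\<And>z. z \<in> lattice2 x y \<Longrightarrow> z \<noteq> 0 \<Longrightarrow> norm b \<le> norm z"
    using lattice2_shortest_vector[OF D] by blast
  obtain w where wL: "w \<in> lattice2 x y" and "det2 b w \<noteq> 0"
    and w_le: "(norm w)^2 \<le> max ((norm x)^2) ((norm y)^2)"
  proof (cases "det2 b x = 0")
    case True
    then have "det2 b y \<noteq> 0" using det2_eq_0_trans[OF \<open>b \<noteq> 0\<close>] D by blast
    then show ?thesis using that[of y] lattice2_generators by simp
  next
    case False
    then show ?thesis using that[of x] lattice2_generators by simp
  qed
  \<comment> \<open>\<open>b\<close> is a shortest lattice vector and \<open>v\<close> is \<open>w\<close> reduced modulo \<open>b\<close>, as in Lagrange--Gauss reduction.\<close>
  define v where "v = w - of_int (round ((w \<bullet> b) / (norm b)^2)) *\<^sub>R b"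
  have vL: "v \<in> lattice2 x y" unfolding v_def by (intro lattice2_diff wL lattice2_scale bL)
  have det_bv: "det2 b v = det2 b w" unfolding v_def by simp
  then have "v \<noteq> 0" using \<open>det2 b w \<noteq> 0\<close> by auto
  then have bv: "norm b \<le> norm v" using b_min[OF vL] by blast
  have "w \<noteq> 0" using \<open>det2 b w \<noteq> 0\<close> by auto
  then have bw: "norm b \<le> norm w" using b_min[OF wL] by blast
  have red: "\<bar>b \<bullet> v\<bar> \<le> (norm b)^2 / 2"
    using abs_inner_round_reduce_le[of w b] unfolding v_def by (simp add: inner_commute)
  have v_le: "(norm v)^2 \<le> 5/4 * max ((norm x)^2) ((norm y)^2)"
    using norm_sq_le_if_size_reduced[OF bw det_bv red \<open>b \<noteq> 0\<close>] w_le by simp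
  obtain j where uv: "norm (of_int j *\<^sub>R b) \<le> norm v" "norm v \<le> 2 * norm (of_int j *\<^sub>R b)"
    using exists_int_multiple_norm_between[OF \<open>b \<noteq> 0\<close> bv] .
  have "3/4 * (norm (of_int j *\<^sub>R b))^2 * (norm v)^2 \<le> (det2 (of_int j *\<^sub>R b) v)^2"
    using mult_left_mono[OF det2_sq_lower_if_size_reduced[OF bv red], of "(of_int j)^2"]
    by (simp add: power_mult_distrib)
  then show ?thesis
    using that[OF lattice2_scale[OF bL] vL \<open>v \<noteq> 0\<close> uv(1) v_le] det2_sq_lower_if_comparable uv(2)
    by blast
qed

section \<open>Binary quadratic forms\<close>

definition qform :: "real \<Rightarrow> real \<Rightarrow> real \<Rightarrow> real^2 \<Rightarrow> real" where
  "qform a b c z = a * (z$1)^2 + 2 * b * z$1 * z$2 + c * (z$2)^2"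

definition bform :: "real \<Rightarrow> real \<Rightarrow> real \<Rightarrow> real^2 \<Rightarrow> real^2 \<Rightarrow> real" where
  "bform a b c u v = a * u$1 * v$1 + b * (u$1 * v$2 + u$2 * v$1) + c * u$2 * v$2"

lemma qform_add: "qform a b c (u + v) = qform a b c u + qform a b c v + 2 * bform a b c u v"
  by (simp add: qform_def bform_def power2_eq_square algebra_simps)

lemma qform_scaleR: "qform a b c (t *\<^sub>R z) = t^2 * qform a b c z"
  by (simp add: qform_def power2_eq_square algebra_simps)

lemma qform_mult_qform_minus_bform_sq:
  "qform a b c u * qform a b c v - (bform a b c u v)^2 = (a * c - b^2) * (det2 u v)^2"
  by (simp add: qform_def bform_def det2_def power2_eq_square algebra_simps)

lemma qform_lower_bound: "(a * c - b^2) * (norm z)^2 \<le> (a + c) * qform a b c z"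
proof -
  have "(a + c) * qform a b c z - (a * c - b^2) * (norm z)^2 = (a * z$1 + b * z$2)^2 + (b * z$1 + c * z$2)^2"
    by (simp only: norm_vec2_sq qform_def) (simp add: power2_eq_square algebra_simps)
  then show ?thesis by (metis diff_ge_0_iff_ge add_nonneg_nonneg zero_le_power2)
qed

lemma abs_component_mult_le: "\<bar>u$i * v$j\<bar> \<le> norm u * norm v" for u v :: "real^2"
  by (simp add: abs_mult mult_mono component_le_norm_cart)

lemma abs_bform_le: "\<bar>bform a b c u v\<bar> \<le> (\<bar>a\<bar> + 2 * \<bar>b\<bar> + \<bar>c\<bar>) * (norm u * norm v)"
proof -
  have "\<bar>bform a b c u v\<bar> \<le> \<bar>a\<bar> * \<bar>u$1 * v$1\<bar> + \<bar>b\<bar> * \<bar>u$1 * v$2\<bar> + \<bar>b\<bar> * \<bar>u$2 * v$1\<bar> + \<bar>c\<bar> * \<bar>u$2 * v$2\<bar>"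
    unfolding bform_def by (simp add: abs_mult[symmetric] algebra_simps)
  also have "\<dots> \<le> \<bar>a\<bar> * (norm u * norm v) + \<bar>b\<bar> * (norm u * norm v)
      + \<bar>b\<bar> * (norm u * norm v) + \<bar>c\<bar> * (norm u * norm v)"
    by (intro add_mono mult_left_mono abs_component_mult_le) auto
  finally show ?thesis by (simp add: algebra_simps)
qed

lemma qform_le: "qform a b c z \<le> (\<bar>a\<bar> + 2 * \<bar>b\<bar> + \<bar>c\<bar>) * (norm z)^2"
proof -
  have "qform a b c z = bform a b c z z"
    by (simp add: qform_def bform_def power2_eq_square algebra_simps)
  then show ?thesis
    using abs_bform_le[of a b c z z] by (simp add: power2_eq_square)
qed

lemma qform_bform_le_if_norm_le:
  fixes a b c :: real
  defines "\<Sigma> \<equiv> \<bar>a\<bar> + 2 * \<bar>b\<bar> + \<bar>c\<bar>"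
  assumes "norm u \<le> norm v"
  shows "qform a b c u \<le> \<Sigma> * (norm v)^2" "qform a b c v \<le> \<Sigma> * (norm v)^2"
    "\<bar>bform a b c u v\<bar> \<le> \<Sigma> * (norm v)^2"
proof -
  have "0 \<le> \<Sigma>" unfolding \<Sigma>_def by simp
  then show "qform a b c u \<le> \<Sigma> * (norm v)^2" "qform a b c v \<le> \<Sigma> * (norm v)^2"
    using order_trans[OF qform_le mult_left_mono[OF power_mono[OF assms(2)]]] qform_le[of a b c v]
    unfolding \<Sigma>_def by simp_all
  show "\<bar>bform a b c u v\<bar> \<le> \<Sigma> * (norm v)^2"
    using order_trans[OF abs_bform_le mult_left_mono[OF mult_right_mono[OF assms(2)]]] \<open>0 \<le> \<Sigma>\<close>
    unfolding \<Sigma>_def by (simp add: power2_eq_square)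
qed

lemma qform_nonneg:
  assumes "0 < a" "0 < c" "0 < a * c - b^2"
  shows "0 \<le> qform a b c z"
proof -
  have "0 \<le> (a * c - b^2) * (norm z)^2" using assms by simp
  then have "0 \<le> (a + c) * qform a b c z" using qform_lower_bound order_trans by blast
  then show ?thesis using assms by (simp add: zero_le_mult_iff)
qed

lemma qform_pos_def_coeffs:
  assumes "\<And>z. z \<noteq> 0 \<Longrightarrow> 0 < qform a b c z"
  shows "0 < a" "0 < c" "0 < a * c - b^2"
proof -
  have "qform a b c (axis 1 1) = a" "qform a b c (axis 2 1) = c"
    by (simp_all add: qform_def axis_def)
  then show "0 < a" "0 < c"
    using assms[of "axis 1 1"] assms[of "axis 2 1"] by simp_all
  define w :: "real^2" where "w = (\<chi> i. if i = 1 then - b else a)"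
  have "w $ 2 \<noteq> 0" using \<open>0 < a\<close> by (simp add: w_def)
  then have "w \<noteq> 0" by auto
  moreover have "qform a b c w = a * (a * c - b^2)"
    by (simp add: qform_def w_def power2_eq_square algebra_simps)
  ultimately show "0 < a * c - b^2"
    using assms[of w] \<open>0 < a\<close> by (simp add: zero_less_mult_iff)
qed

lemma assumption_A_quadratic_taylor:
  assumes "assumption_A \<kappa>" and even: "\<And>z. \<kappa> (-z) = \<kappa> z"
  obtains a b c where "0 < a" "0 < c" "0 < a * c - b^2"
    "\<forall>\<eta>>0. \<exists>r>0. \<forall>z. norm z < r \<longrightarrow> \<bar>\<kappa> z - \<kappa> 0 + qform a b c z / 2\<bar> \<le> \<eta> * (norm z)^2"
proof -
  obtain U where U: "open U" "0 \<in> U" and "Ck_on 6 U \<kappa>"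
    and neg: "\<And>v::real^2. norm v = 1 \<Longrightarrow> dir_deriv (dir_deriv \<kappa> v) v 0 < 0"
    using assms(1) unfolding assumption_A_def by blast
  then have C2: "Ck_on 2 U \<kappa>" using Ck_on_mono[of 2 6] by simp
  then have "\<kappa> differentiable_on U" "\<And>v. dir_deriv \<kappa> v differentiable_on U"
    by (simp_all add: numeral_2_eq_2)
  define a where "a = - partial2 \<kappa> 1 1 0"
  define b where "b = - (partial2 \<kappa> 1 2 0 + partial2 \<kappa> 2 1 0) / 2"
  define c where "c = - partial2 \<kappa> 2 2 0"
  have hess: "dir_deriv (dir_deriv \<kappa> z) z 0 = - qform a b c z" for z
    unfolding second_dir_deriv_coordinates[OF U \<open>\<kappa> differentiable_on U\<close>
        \<open>\<And>v. dir_deriv \<kappa> v differentiable_on U\<close>]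
    by (simp add: a_def b_def c_def qform_def sum_2 power2_eq_square field_simps)
  have "0 < qform a b c z" if "z \<noteq> 0" for z
  proof -
    have "0 < qform a b c ((1 / norm z) *\<^sub>R z)"
      using neg[of "(1 / norm z) *\<^sub>R z"] that unfolding hess by simp
    then show ?thesis unfolding qform_scaleR using that by (simp add: zero_less_mult_iff)
  qed
  note coeffs = qform_pos_def_coeffs[OF this]
  have "\<forall>\<eta>>0. \<exists>r>0. \<forall>z. norm z < r \<longrightarrow> \<bar>\<kappa> z - \<kappa> 0 + qform a b c z / 2\<bar> \<le> \<eta> * (norm z)^2"
  proof (intro allI impI)
    fix \<eta> :: real assume "\<eta> > 0"
    from second_order_taylor_even[where k = \<kappa>, OF U C2 even this]
    show "\<exists>r>0. \<forall>z. norm z < r \<longrightarrow> \<bar>\<kappa> z - \<kappa> 0 + qform a b c z / 2\<bar> \<le> \<eta> * (norm z)^2"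
      by (simp add: hess)
  qed
  then show ?thesis using that coeffs by blast
qed

section \<open>The d'Alembert functional equation\<close>

definition dalembert_set :: "('a::real_vector \<Rightarrow> real) \<Rightarrow> 'a set" where
  "dalembert_set k = {w. \<forall>t. k (t + w) + k (t - w) = 2 * k w * k t}"

lemma three_term_relation_imp_dalembert:
  fixes k :: "'a::real_vector \<Rightarrow> real"
  assumes rel: "\<And>t. c1 * k t + c2 * k (t - x) + c3 * k (t - y) = 0"
    and even: "\<And>z. k (-z) = k z" and "k 0 = 1" and "c1 * c2 \<noteq> 0"
  shows "x \<in> dalembert_set k"
proof -
  have rel': "c1 * k t + c2 * k (t + x) + c3 * k (t + y) = 0" for t
    using rel[of "-t"] even[of t] even[of "t + x"] even[of "t + y"] by simp
  \<comment> \<open>Combining the relation at \<open>t + y\<close> with its reflection at \<open>t\<close> and at \<open>t - x\<close> eliminates \<open>y\<close>.\<close>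
  have E: "c1 * c2 * (k (t + x) + k (t - x)) = (c3^2 - c1^2 - c2^2) * k t" for t
  proof -
    have "c1 * k (t + y) + c2 * k (t - x + y) + c3 * k t = 0"
      using rel[of "t + y"] by (simp add: algebra_simps)
    moreover have "c1 * k (t - x) + c2 * k t + c3 * k (t - x + y) = 0"
      using rel'[of "t - x"] by (simp add: algebra_simps)
    moreover have "c3 * (c1 * k (t + y) + c2 * k (t - x + y) + c3 * k t)
        - c1 * (c1 * k t + c2 * k (t + x) + c3 * k (t + y))
        - c2 * (c1 * k (t - x) + c2 * k t + c3 * k (t - x + y))
        = (c3^2 - c1^2 - c2^2) * k t - c1 * c2 * (k (t + x) + k (t - x))"
      by (simp add: power2_eq_square algebra_simps)
    ultimately show ?thesis
      using rel'[of t] by simp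
  qed
  have "c3^2 - c1^2 - c2^2 = c1 * c2 * (2 * k x)"
    using E[of 0] even[of x] \<open>k 0 = 1\<close> by simp
  then have "c1 * c2 * (k (t + x) + k (t - x)) = c1 * c2 * (2 * k x * k t)" for t
    using E[of t] by (simp add: mult_ac)
  then show ?thesis using \<open>c1 * c2 \<noteq> 0\<close> unfolding dalembert_set_def by simp
qed

lemma dalembert_set_0: "k 0 = 1 \<Longrightarrow> 0 \<in> dalembert_set k"
  unfolding dalembert_set_def by simp

lemma dalembert_set_uminus:
  assumes even: "\<And>z. k (-z) = k z" and "w \<in> dalembert_set k"
  shows "-w \<in> dalembert_set k"
  using assms unfolding dalembert_set_def by (auto simp: add.commute)

lemma dalembert_set_add:
  assumes u: "u \<in> dalembert_set k" and v: "v \<in> dalembert_set k" and uv: "u - v \<in> dalembert_set k"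
  shows "u + v \<in> dalembert_set k"
proof -
  have U: "k (t + u) + k (t - u) = 2 * k u * k t"
    and V: "k (t + v) + k (t - v) = 2 * k v * k t"
    and W: "k (t + (u - v)) + k (t - (u - v)) = 2 * k (u - v) * k t" for t
    using u v uv unfolding dalembert_set_def by blast+
  have uv_sum: "2 * k v * k u - k (u - v) = k (u + v)"
    using V[of u] by simp
  have "k (t + (u + v)) + k (t - (u + v)) = 2 * k (u + v) * k t" for t
  proof -
    have "k (t + (u + v)) + k (t - (u + v)) = 2 * k u * (k (t + v) + k (t - v)) - 2 * k (u - v) * k t"
      using U[of "t + v"] U[of "t - v"] W[of t] by (simp add: algebra_simps)
    also have "\<dots> = 2 * (2 * k v * k u - k (u - v)) * k t"
      unfolding V[of t] by (simp add: algebra_simps)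
    finally show ?thesis unfolding uv_sum .
  qed
  then show ?thesis unfolding dalembert_set_def by blast
qed

lemma dalembert_set_add_int_multiple:
  assumes even: "\<And>z. k (-z) = k z"
    and "a \<in> dalembert_set k" "b \<in> dalembert_set k" "a - b \<in> dalembert_set k"
  shows "a + of_int n *\<^sub>R b \<in> dalembert_set k"
proof -
  have nat_multiple: "a + of_nat j *\<^sub>R b \<in> dalembert_set k"
    if "a \<in> dalembert_set k" "b \<in> dalembert_set k" "a - b \<in> dalembert_set k" for a b j
  proof -
    have "a + of_nat j *\<^sub>R b \<in> dalembert_set k \<and> a + of_nat (Suc j) *\<^sub>R b \<in> dalembert_set k"
    proof (induction j)
      case 0
      then show ?case using that dalembert_set_add by simp
    next
      case (Suc j)
      have "(a + of_nat (Suc j) *\<^sub>R b) - b = a + of_nat j *\<^sub>R b"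
        and sum: "a + of_nat (Suc (Suc j)) *\<^sub>R b = (a + of_nat (Suc j) *\<^sub>R b) + b"
        by (simp_all add: algebra_simps scaleR_2)
      then show ?case
        unfolding sum using Suc dalembert_set_add[of "a + of_nat (Suc j) *\<^sub>R b" k b] that(2)
        by metis
    qed
    then show ?thesis ..
  qed
  show ?thesis
  proof (cases "n \<ge> 0")
    case True
    then show ?thesis using nat_multiple[OF assms(2-4), of "nat n"] by simp
  next
    case False
    have "a - (- b) \<in> dalembert_set k"
      using dalembert_set_add[OF assms(2-4)] by simp
    then show ?thesis
      using nat_multiple[OF assms(2) dalembert_set_uminus[OF even assms(3)], of "nat (- n)"] False
      by simp
  qed
qed

lemma lattice2_subset_dalembert_set:
  fixes k :: "real^2 \<Rightarrow> real"
  assumes even: "\<And>z. k (-z) = k z" and "k 0 = 1"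
    and x: "x \<in> dalembert_set k" and y: "y \<in> dalembert_set k" and "y - x \<in> dalembert_set k"
  shows "lattice2 x y \<subseteq> dalembert_set k"
proof
  fix z assume "z \<in> lattice2 x y"
  then obtain n m where z: "z = of_int n *\<^sub>R x + of_int m *\<^sub>R y"
    unfolding lattice2_def by blast
  note neg = dalembert_set_uminus[of k, OF even]
  have "x - y \<in> dalembert_set k" using neg[OF \<open>y - x \<in> dalembert_set k\<close>] by simp
  then have "- x - y \<in> dalembert_set k" using neg[OF dalembert_set_add[OF x y]] by simp
  then have "- x + of_int m *\<^sub>R y \<in> dalembert_set k"
    using dalembert_set_add_int_multiple[OF even neg[OF x] y] by simp
  moreover have "of_int m *\<^sub>R y \<in> dalembert_set k"
    using dalembert_set_add_int_multiple[OF even dalembert_set_0[of k, OF \<open>k 0 = 1\<close>] y, of m] neg[OF y]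
    by simp
  ultimately have "of_int m *\<^sub>R y + of_int n *\<^sub>R x \<in> dalembert_set k"
    using dalembert_set_add_int_multiple[OF even _ x] by simp
  then show "z \<in> dalembert_set k" unfolding z by (simp add: add.commute)
qed

lemma dalembert_product_identity:
  fixes k :: "'a::real_vector \<Rightarrow> real"
  assumes even: "\<And>z. k (-z) = k z" and "k 0 = 1"
    and u: "u \<in> dalembert_set k" and v: "v \<in> dalembert_set k" and uv: "u + v \<in> dalembert_set k"
  shows "(k (u + v) - k u * k v)^2 = (1 - (k u)^2) * (1 - (k v)^2)"
proof -
  have U: "k (t + u) + k (t - u) = 2 * k u * k t"
    and V: "k (t + v) + k (t - v) = 2 * k v * k t"
    and W: "k (t + (u + v)) + k (t - (u + v)) = 2 * k (u + v) * k t" for t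
    using u v uv unfolding dalembert_set_def by blast+
  have "u - v + (u + v) = 2 *\<^sub>R u" "u - v - (u + v) = - (2 *\<^sub>R v)" "u + u = 2 *\<^sub>R u" "v + v = 2 *\<^sub>R v"
    by (simp_all add: algebra_simps scaleR_2)
  then have "k (2 *\<^sub>R u) + k (2 *\<^sub>R v) = 2 * k (u + v) * k (u - v)"
    and "k (2 *\<^sub>R u) + 1 = 2 * k u * k u" "k (2 *\<^sub>R v) + 1 = 2 * k v * k v"
    using W[of "u - v"] U[of u] V[of v] even[of "2 *\<^sub>R v"] \<open>k 0 = 1\<close> by simp_all
  moreover have "k (u - v) = 2 * k u * k v - k (u + v)"
    using V[of u] by (simp add: algebra_simps)
  ultimately show ?thesis
    by (simp add: power2_eq_square algebra_simps)
qed

section \<open>Three-term relations of the kernel near the origin\<close>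

lemma abs_mult_le_mult: "\<bar>x\<bar> \<le> a \<Longrightarrow> \<bar>y\<bar> \<le> b \<Longrightarrow> \<bar>x * y\<bar> \<le> a * b" for x y a b :: real
  by (simp add: abs_mult mult_mono')

lemma defect_error_terms_le:
  fixes \<eta> \<rho> \<Sigma> K :: real
  assumes K: "1 \<le> K" "0 \<le> \<Sigma>" "\<Sigma> \<le> 2 * K" and \<eta>: "0 \<le> \<eta>" "\<eta> \<le> 1" and \<rho>: "0 \<le> \<rho>" "\<rho> \<le> 1"
  shows "\<eta> * (4 * K + 2 * \<Sigma>) + \<rho> * K^2 * (\<rho> * K^2 + 4 * K)
           + (6 * \<eta> + \<rho> * K^2) * (6 * \<eta> + \<rho> * K^2 + 2 * \<Sigma>) \<le> 140 * (\<eta> + \<rho>) * K^4"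
proof -
  have K_pow: "K \<le> K^2" "K^2 \<le> K^3" "K^3 \<le> K^4"
    using K(1) mult_left_mono[of 1 K K] mult_left_mono[of 1 K "K^2"] mult_left_mono[of 1 K "K^3"]
    by (simp_all add: power2_eq_square power3_eq_cube power4_eq_xxxx)
  have "4 * K + 2 * \<Sigma> \<le> 8 * K^4" using K K_pow by linarith
  then have t1: "\<eta> * (4 * K + 2 * \<Sigma>) \<le> 8 * (\<eta> * K^4)"
    using mult_left_mono[of _ _ \<eta>] \<eta> by fastforce
  have "\<rho> * \<rho> \<le> \<rho>" using \<rho> by (simp add: mult_left_le_one_le)
  then have "(\<rho> * \<rho>) * K^4 \<le> \<rho> * K^4" "4 * \<rho> * K^3 \<le> 4 * \<rho> * K^4"
    using K_pow \<rho> by (simp_all add: mult_right_mono mult_left_mono)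
  moreover have "\<rho> * K^2 * (\<rho> * K^2 + 4 * K) = (\<rho> * \<rho>) * K^4 + 4 * \<rho> * K^3"
    by (simp add: algebra_simps power2_eq_square power3_eq_cube power4_eq_xxxx)
  ultimately have t2: "\<rho> * K^2 * (\<rho> * K^2 + 4 * K) \<le> 5 * (\<rho> * K^4)" by linarith
  define e where "e = 6 * \<eta> + \<rho> * K^2"
  have "\<eta> \<le> \<eta> * K^2" "\<rho> * K^2 \<le> 2 * K^2" "\<eta> * K^2 \<le> K^2" "0 \<le> \<rho> * K^2"
    using K K_pow \<eta> \<rho> mult_left_mono[of 1 "K^2" \<eta>] mult_right_mono[of \<rho> 2 "K^2"]
      mult_right_mono[of \<eta> 1 "K^2"] by simp_all
  then have "e \<le> 7 * (\<eta> * K^2) + 7 * (\<rho> * K^2)" "e + 2 * \<Sigma> \<le> 18 * K^2" "0 \<le> e + 2 * \<Sigma>"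
    using K K_pow \<eta> unfolding e_def by linarith+
  then have "e * (e + 2 * \<Sigma>) \<le> (7 * (\<eta> * K^2) + 7 * (\<rho> * K^2)) * (18 * K^2)"
    using \<eta> \<rho> by (intro mult_mono) simp_all
  also have "\<dots> = 126 * (\<eta> * K^4) + 126 * (\<rho> * K^4)"
    by (simp add: algebra_simps power2_eq_square power4_eq_xxxx)
  finally have t3: "e * (e + 2 * \<Sigma>) \<le> 126 * (\<eta> * K^4) + 126 * (\<rho> * K^4)" .
  have "0 \<le> \<eta> * K^4" "0 \<le> \<rho> * K^4" using \<eta> \<rho> by simp_all
  with t1 t2 t3 show ?thesis unfolding e_def by (simp add: algebra_simps)
qed

text \<open>
  In the application \<open>A\<close>, \<open>B\<close>, \<open>G\<close> are \<open>(1 - \<kappa> u) / R\<close>, \<open>(1 - \<kappa> v) / R\<close>, \<open>(1 - \<kappa> (u + v)) / R\<close>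
  and \<open>Qu\<close>, \<open>Qv\<close>, \<open>Bm\<close> are \<open>Q u / R\<close>, \<open>Q v / R\<close>, \<open>B(u, v) / R\<close> with \<open>R = \<bar>v\<bar>\<^sup>2\<close>; the
  hypothesis \<open>id\<close> is the d'Alembert product identity divided by \<open>R\<^sup>2\<close>.
\<close>

lemma product_identity_defect_bound:
  fixes A B G R Qu Qv Bm \<eta> \<rho> \<Sigma> :: real
  defines "K \<equiv> \<Sigma> / 2 + 1"
  assumes id: "(A + B - G - R * A * B)^2 = A * B * (2 - R * A) * (2 - R * B)"
    and A: "\<bar>A - Qu / 2\<bar> \<le> \<eta>" and B: "\<bar>B - Qv / 2\<bar> \<le> \<eta>"
    and G: "\<bar>G - (Qu + Qv + 2 * Bm) / 2\<bar> \<le> 4 * \<eta>"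
    and Qu: "0 \<le> Qu" "Qu \<le> \<Sigma>" and Qv: "0 \<le> Qv" "Qv \<le> \<Sigma>" and Bm: "\<bar>Bm\<bar> \<le> \<Sigma>"
    and R: "0 \<le> R" "R \<le> \<rho>" and \<eta>: "0 \<le> \<eta>" "\<eta> \<le> 1" and "\<rho> \<le> 1"
  shows "Qu * Qv - Bm^2 \<le> 140 * (\<eta> + \<rho>) * K^4"
proof -
  have "\<bar>A\<bar> \<le> K" "\<bar>B\<bar> \<le> K" using A B Qu Qv \<eta> unfolding K_def by (simp_all add: abs_le_iff)
  then have AB: "\<bar>A + B\<bar> \<le> 2 * K" and RAB: "\<bar>R * A * B\<bar> \<le> \<rho> * K^2"
    using abs_mult_le_mult[of A K B K] abs_mult_le_mult[of R \<rho> "A * B" "K^2"] R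
    by (simp_all add: power2_eq_square mult.assoc)
  define e where "e = 6 * \<eta> + \<rho> * K^2"
  define X where "X = A + B - G - R * A * B"
  have "X + Bm = (A - Qu / 2) + (B - Qv / 2) - (G - (Qu + Qv + 2 * Bm) / 2) - R * A * B"
    unfolding X_def by (simp add: field_simps)
  then have "\<bar>X + Bm\<bar> \<le> e" using A B G RAB unfolding e_def by (simp only: abs_le_iff) linarith
  moreover have "\<bar>X - Bm\<bar> \<le> e + 2 * \<Sigma>" using calculation Bm by (simp only: abs_le_iff) linarith
  ultimately have defect_X: "\<bar>X^2 - Bm^2\<bar> \<le> e * (e + 2 * \<Sigma>)"
    using abs_mult_le_mult[of "X + Bm" e "X - Bm" "e + 2 * \<Sigma>"] by (simp add: power2_eq_square algebra_simps)
  have "A * B * (2 - R * A) * (2 - R * B) - 4 * A * B = (R * A * B) * (R * A * B - 2 * (A + B))"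
    by (simp add: algebra_simps)
  moreover have "\<bar>R * A * B - 2 * (A + B)\<bar> \<le> \<rho> * K^2 + 4 * K" using RAB AB by (auto simp: abs_le_iff)
  ultimately have defect_RHS: "\<bar>A * B * (2 - R * A) * (2 - R * B) - 4 * A * B\<bar> \<le> \<rho> * K^2 * (\<rho> * K^2 + 4 * K)"
    using abs_mult_le_mult[OF RAB] by simp
  have "4 * A * B - Qu * Qv = (2 * A - Qu) * (2 * B) + Qu * (2 * B - Qv)" by (simp add: algebra_simps)
  moreover have "\<bar>(2 * A - Qu) * (2 * B)\<bar> \<le> (2 * \<eta>) * (2 * K)" "\<bar>Qu * (2 * B - Qv)\<bar> \<le> \<Sigma> * (2 * \<eta>)"
    using \<open>\<bar>B\<bar> \<le> K\<close> A B Qu by (intro abs_mult_le_mult; simp add: abs_le_iff)+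
  ultimately have defect_AB: "\<bar>4 * A * B - Qu * Qv\<bar> \<le> \<eta> * (4 * K + 2 * \<Sigma>)"
    by (simp only: abs_le_iff) (simp add: algebra_simps)
  have "Qu * Qv - Bm^2 \<le> \<eta> * (4 * K + 2 * \<Sigma>) + \<rho> * K^2 * (\<rho> * K^2 + 4 * K) + e * (e + 2 * \<Sigma>)"
    using defect_X defect_RHS defect_AB id unfolding X_def by (simp only: abs_le_iff) linarith
  also have "\<dots> \<le> 140 * (\<eta> + \<rho>) * K^4"
    unfolding e_def using Qu R \<eta> \<open>\<rho> \<le> 1\<close> unfolding K_def by (intro defect_error_terms_le) auto
  finally show ?thesis .
qed

lemma abs_lt_1_of_taylor:
  fixes \<kappa> :: "real^2 \<Rightarrow> real" and a b c :: real
  defines "\<Sigma> \<equiv> \<bar>a\<bar> + 2 * \<bar>b\<bar> + \<bar>c\<bar>"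
  assumes taylor: "\<And>z. norm z < r \<Longrightarrow> \<bar>\<kappa> z - 1 + qform a b c z / 2\<bar> \<le> \<eta> * (norm z)^2"
    and "0 < a + c" and "2 * \<eta> * (a + c) < a * c - b^2" and "0 \<le> \<eta>" "\<eta> \<le> 1"
    and "\<rho> * (\<Sigma> / 2 + 1) < 2"
    and w: "w \<noteq> 0" "norm w < r" "(norm w)^2 \<le> \<rho>"
  shows "\<bar>\<kappa> w\<bar> < 1"
proof -
  have "0 < (norm w)^2" using w by simp
  with assms(4) have "(2 * \<eta> * (a + c)) * (norm w)^2 < (a * c - b^2) * (norm w)^2"
    by (rule mult_strict_right_mono)
  then have "(2 * \<eta> * (norm w)^2) * (a + c) < (a * c - b^2) * (norm w)^2"
    by (simp add: algebra_simps)
  also have "\<dots> \<le> (a + c) * qform a b c w" by (rule qform_lower_bound)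
  finally have "2 * \<eta> * (norm w)^2 < qform a b c w"
    using \<open>0 < a + c\<close> by (simp add: mult.commute)
  moreover have "qform a b c w \<le> \<Sigma> * \<rho>"
    using qform_le[of a b c w] mult_left_mono[OF w(3), of \<Sigma>] unfolding \<Sigma>_def by simp
  moreover have "\<eta> * (norm w)^2 \<le> \<rho>"
    using mult_mono[OF \<open>\<eta> \<le> 1\<close> w(3)] \<open>0 \<le> \<eta>\<close> by simp
  ultimately show ?thesis
    using taylor[OF w(2)] assms(7) by (simp add: abs_le_iff abs_less_iff algebra_simps)
qed

lemma zero_if_symmetric_system:
  fixes p q K :: real
  assumes "p + q * K = 0" "p * K + q = 0" "\<bar>K\<bar> < 1"
  shows "p = 0 \<and> q = 0"
proof -
  have "p = - (q * K)" using assms(1) by linarith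
  then have "q * (1 - K^2) = 0" using assms(2) by (simp add: power2_eq_square algebra_simps)
  moreover have "K^2 < 1" using assms(3) abs_square_less_1 by blast
  ultimately show ?thesis using assms(1) by simp
qed

lemma three_term_relation_dalembert_triangle:
  fixes k :: "'a::real_vector \<Rightarrow> real"
  assumes rel: "\<And>t. c1 * k t + c2 * k (t - x) + c3 * k (t - y) = 0"
    and even: "\<And>z. k (-z) = k z" and "k 0 = 1" and "\<not> (c1 = 0 \<and> c2 = 0 \<and> c3 = 0)"
    and "\<bar>k x\<bar> < 1" "\<bar>k y\<bar> < 1" "\<bar>k (y - x)\<bar> < 1"
  shows "x \<in> dalembert_set k" "y \<in> dalembert_set k" "y - x \<in> dalembert_set k"
proof -
  have k_minus: "k (- x) = k x" "k (- y) = k y" "k (x - y) = k (y - x)"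
    using even[of x] even[of y] even[of "y - x"] by simp_all
  have "c3 \<noteq> 0"
    using rel[of 0] rel[of x] zero_if_symmetric_system[of c1 c2 "k x"] assms(4,5) \<open>k 0 = 1\<close> k_minus
    by auto
  moreover have "c2 \<noteq> 0"
    using rel[of 0] rel[of y] zero_if_symmetric_system[of c1 c3 "k y"] assms(4,6) \<open>k 0 = 1\<close> k_minus
    by auto
  moreover have "c1 \<noteq> 0"
    using rel[of x] rel[of y] zero_if_symmetric_system[of c2 c3 "k (y - x)"] assms(4,7) \<open>k 0 = 1\<close> k_minus
    by auto
  ultimately show "x \<in> dalembert_set k" "y \<in> dalembert_set k" "y - x \<in> dalembert_set k"
    using three_term_relation_imp_dalembert[of c1 k c2 x c3 y, OF rel even \<open>k 0 = 1\<close>]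
      three_term_relation_imp_dalembert[of c1 k c3 y c2 x, OF _ even \<open>k 0 = 1\<close>]
      three_term_relation_imp_dalembert[of c2 k c3 "y - x" c1 "- x", OF _ even \<open>k 0 = 1\<close>]
      rel rel[of "_ + x"]
    by (simp_all add: algebra_simps)
qed

lemma abs_normalized_error_le:
  fixes k q n R C \<eta> :: real
  assumes "\<bar>k - 1 + q / 2\<bar> \<le> \<eta> * n" "n \<le> C * R" "0 < R" "0 \<le> \<eta>"
  shows "\<bar>(1 - k) / R - q / R / 2\<bar> \<le> C * \<eta>"
proof -
  have "(1 - k) / R - q / R / 2 = - ((k - 1 + q / 2) / R)"
    using \<open>0 < R\<close> by (simp add: field_simps)
  then have "\<bar>(1 - k) / R - q / R / 2\<bar> = \<bar>k - 1 + q / 2\<bar> / R"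
    using \<open>0 < R\<close> by simp
  also have "\<dots> \<le> \<eta> * n / R"
    using assms(1) \<open>0 < R\<close> by (simp add: divide_right_mono)
  also have "\<dots> \<le> C * \<eta>"
    using mult_left_mono[OF assms(2) assms(4)] \<open>0 < R\<close> by (simp add: field_simps)
  finally show ?thesis .
qed

lemma dalembert_qform_defect_bound:
  fixes \<kappa> :: "real^2 \<Rightarrow> real" and a b c :: real
  defines "\<Sigma> \<equiv> \<bar>a\<bar> + 2 * \<bar>b\<bar> + \<bar>c\<bar>"
  assumes taylor: "\<And>z. norm z < r \<Longrightarrow> \<bar>\<kappa> z - 1 + qform a b c z / 2\<bar> \<le> \<eta> * (norm z)^2"
    and qform_nonneg: "\<And>z. 0 \<le> qform a b c z"
    and product: "(\<kappa> (u + v) - \<kappa> u * \<kappa> v)^2 = (1 - (\<kappa> u)^2) * (1 - (\<kappa> v)^2)"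
    and uv: "norm u \<le> norm v" "v \<noteq> 0" "2 * norm v < r" "(norm v)^2 \<le> \<rho>"
    and "0 \<le> \<eta>" "\<eta> \<le> 1" "\<rho> \<le> 1"
  shows "qform a b c u * qform a b c v - (bform a b c u v)^2
           \<le> 140 * (\<eta> + \<rho>) * (\<Sigma> / 2 + 1)^4 * (norm v)^4"
proof -
  define R where "R = (norm v)^2"
  have "0 < R" unfolding R_def using uv by simp
  have norms: "(norm u)^2 \<le> R" "(norm (u + v))^2 \<le> 4 * R"
  proof -
    show "(norm u)^2 \<le> R" unfolding R_def using uv(1) by (simp add: power_mono)
    have "norm (u + v) \<le> 2 * norm v" using norm_triangle_ineq[of u v] uv(1) by linarith
    then show "(norm (u + v))^2 \<le> 4 * R"
      unfolding R_def using power_mono[of "norm (u + v)" "2 * norm v" 2] by (simp add: power_mult_distrib)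
  qed
  have "norm u < r" "norm v < r" "norm (u + v) < r"
    using uv norm_triangle_ineq[of u v] norm_ge_zero[of v] by linarith+
  then have normalized_taylor: "\<bar>(1 - \<kappa> z) / R - qform a b c z / R / 2\<bar> \<le> C * \<eta>"
    if "z \<in> {u, v, u + v}" "(norm z)^2 \<le> C * R" for z C
  proof -
    have "norm z < r" using that(1) \<open>norm u < r\<close> \<open>norm v < r\<close> \<open>norm (u + v) < r\<close> by auto
    then show ?thesis by (rule abs_normalized_error_le[OF taylor that(2) \<open>0 < R\<close> \<open>0 \<le> \<eta>\<close>])
  qed
  \<comment> \<open>Dividing by \<open>R = \<bar>v\<bar>\<^sup>2\<close> keeps all quantities bounded independently of the size of \<open>v\<close>.\<close>
  define Qu Qv Bm where "Qu = qform a b c u / R" and "Qv = qform a b c v / R" and "Bm = bform a b c u v / R"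
  have "Qu * Qv - Bm^2 \<le> 140 * (\<eta> + \<rho>) * (\<Sigma> / 2 + 1)^4"
  proof (rule product_identity_defect_bound)
    show "((1 - \<kappa> u) / R + (1 - \<kappa> v) / R - (1 - \<kappa> (u + v)) / R - R * ((1 - \<kappa> u) / R) * ((1 - \<kappa> v) / R))^2
        = (1 - \<kappa> u) / R * ((1 - \<kappa> v) / R) * (2 - R * ((1 - \<kappa> u) / R)) * (2 - R * ((1 - \<kappa> v) / R))"
    proof -
      have "(1 - \<kappa> u) / R + (1 - \<kappa> v) / R - (1 - \<kappa> (u + v)) / R - R * ((1 - \<kappa> u) / R) * ((1 - \<kappa> v) / R)
          = (\<kappa> (u + v) - \<kappa> u * \<kappa> v) / R"
        and "(1 - \<kappa> u) / R * ((1 - \<kappa> v) / R) * (2 - R * ((1 - \<kappa> u) / R)) * (2 - R * ((1 - \<kappa> v) / R))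
          = (1 - (\<kappa> u)^2) * (1 - (\<kappa> v)^2) / R^2"
        using \<open>0 < R\<close> by (simp_all add: field_simps power2_eq_square)
      then show ?thesis using product by (simp add: power_divide)
    qed
    show "\<bar>(1 - \<kappa> u) / R - Qu / 2\<bar> \<le> \<eta>" "\<bar>(1 - \<kappa> v) / R - Qv / 2\<bar> \<le> \<eta>"
      using normalized_taylor[of u 1] normalized_taylor[of v 1] norms unfolding Qu_def Qv_def R_def by simp_all
    show "\<bar>(1 - \<kappa> (u + v)) / R - (Qu + Qv + 2 * Bm) / 2\<bar> \<le> 4 * \<eta>"
      using normalized_taylor[of "u + v" 4] norms unfolding Qu_def Qv_def Bm_def
      by (simp add: qform_add add_divide_distrib)
    show "0 \<le> Qu" "0 \<le> Qv" unfolding Qu_def Qv_def using qform_nonneg \<open>0 < R\<close> by simp_all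
    have "qform a b c u \<le> \<Sigma> * R" "qform a b c v \<le> \<Sigma> * R" "\<bar>bform a b c u v\<bar> \<le> \<Sigma> * R"
      using qform_bform_le_if_norm_le[OF uv(1)] unfolding \<Sigma>_def R_def by simp_all
    then show "Qu \<le> \<Sigma>" "Qv \<le> \<Sigma>" "\<bar>Bm\<bar> \<le> \<Sigma>"
      unfolding Qu_def Qv_def Bm_def using \<open>0 < R\<close> by (simp_all add: pos_divide_le_eq)
    show "0 \<le> R" "R \<le> \<rho>" using \<open>0 < R\<close> uv unfolding R_def by simp_all
  qed (use assms in simp_all)
  moreover have "Qu * Qv - Bm^2 = (qform a b c u * qform a b c v - (bform a b c u v)^2) / R^2"
    unfolding Qu_def Qv_def Bm_def using \<open>0 < R\<close> by (simp add: field_simps power2_eq_square)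
  ultimately have "qform a b c u * qform a b c v - (bform a b c u v)^2
      \<le> 140 * (\<eta> + \<rho>) * (\<Sigma> / 2 + 1)^4 * R^2"
    using \<open>0 < R\<close> by (simp add: pos_divide_le_eq del: mult_nonneg_nonneg)
  then show ?thesis unfolding R_def by (simp flip: power_mult)
qed

lemma three_term_relation_trivial_on_small_triangles:
  fixes \<kappa> :: "real^2 \<Rightarrow> real" and a b c :: real
  defines "\<Sigma> \<equiv> \<bar>a\<bar> + 2 * \<bar>b\<bar> + \<bar>c\<bar>"
  assumes even: "\<And>z. \<kappa> (-z) = \<kappa> z" and "\<kappa> 0 = 1"
    and pos: "0 < a" "0 < c" "0 < a * c - b^2"
    and taylor: "\<And>z. norm z < r \<Longrightarrow> \<bar>\<kappa> z - 1 + qform a b c z / 2\<bar> \<le> \<epsilon> * (norm z)^2"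
    and \<epsilon>: "0 < \<epsilon>" "\<epsilon> \<le> 1" "2 * \<epsilon> * (a + c) < a * c - b^2" "\<epsilon> * (\<Sigma> / 2 + 1) < 2"
      "280 * \<epsilon> * (\<Sigma> / 2 + 1)^4 < 3/16 * (a * c - b^2)"
    and "det2 x y \<noteq> 0"
    and small: "\<And>w. w \<in> {x, y, y - x} \<Longrightarrow> norm w < r / 3 \<and> (norm w)^2 < \<epsilon> / 2"
    and rel: "\<And>t. c1 * \<kappa> t + c2 * \<kappa> (t - x) + c3 * \<kappa> (t - y) = 0"
  shows "c1 = 0 \<and> c2 = 0 \<and> c3 = 0"
proof (rule ccontr)
  assume nontrivial: "\<not> (c1 = 0 \<and> c2 = 0 \<and> c3 = 0)"
  have nonzero: "w \<noteq> 0" if "w \<in> {x, y, y - x}" for w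
    using that \<open>det2 x y \<noteq> 0\<close> by (auto simp: det2_def)
  have "\<bar>\<kappa> w\<bar> < 1" if "w \<in> {x, y, y - x}" for w
  proof (rule abs_lt_1_of_taylor[OF taylor _ \<epsilon>(3) _ \<epsilon>(2) \<epsilon>(4)[unfolded \<Sigma>_def]])
    show "0 < a + c" "0 \<le> \<epsilon>" "w \<noteq> 0" using pos \<epsilon> nonzero[OF that] by auto
    show "norm w < r" "(norm w)^2 \<le> \<epsilon>"
      using conjunct1[OF small[OF that]] conjunct2[OF small[OF that]] \<epsilon>(1) norm_ge_zero[of w] by linarith+
  qed
  then have "lattice2 x y \<subseteq> dalembert_set \<kappa>"
    using three_term_relation_dalembert_triangle[OF rel even \<open>\<kappa> 0 = 1\<close> nontrivial]
      lattice2_subset_dalembert_set[OF even \<open>\<kappa> 0 = 1\<close>] by simp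
  moreover obtain u v where uv: "u \<in> lattice2 x y" "v \<in> lattice2 x y" "v \<noteq> 0" "norm u \<le> norm v"
    and v_le: "(norm v)^2 \<le> 5/4 * max ((norm x)^2) ((norm y)^2)"
    and det_uv: "3/16 * (norm v)^4 \<le> (det2 u v)^2"
    using lattice2_reduced_pair[OF \<open>det2 x y \<noteq> 0\<close>] by blast
  ultimately have product: "(\<kappa> (u + v) - \<kappa> u * \<kappa> v)^2 = (1 - (\<kappa> u)^2) * (1 - (\<kappa> v)^2)"
    using dalembert_product_identity[OF even \<open>\<kappa> 0 = 1\<close>] lattice2_add by blast
  have v_small: "2 * norm v < r" "(norm v)^2 \<le> \<epsilon>"
  proof -
    have "(norm x)^2 < (r/3)^2" "(norm y)^2 < (r/3)^2"
      using small[of x] small[of y] by (auto intro: power_strict_mono)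
    then have "max ((norm x)^2) ((norm y)^2) < r^2 / 9" "0 \<le> max ((norm x)^2) ((norm y)^2)"
      by (simp_all add: power_divide le_max_iff_disj)
    then have "4 * (norm v)^2 < r^2"
      using v_le by linarith
    then have "(2 * norm v)^2 < r^2"
      by (simp add: power_mult_distrib)
    moreover have "norm x < r / 3" using small[of x] by simp
    ultimately show "2 * norm v < r"
      using power2_less_imp_less[of "2 * norm v" r] norm_ge_zero[of x] by linarith
    have "max ((norm x)^2) ((norm y)^2) < \<epsilon> / 2" using small[of x] small[of y] by (simp add: max_def)
    then show "(norm v)^2 \<le> \<epsilon>" using v_le \<epsilon>(1) by linarith
  qed
  have "3/16 * (a * c - b^2) * (norm v)^4 = (a * c - b^2) * (3/16 * (norm v)^4)" by simp
  also have "\<dots> \<le> (a * c - b^2) * (det2 u v)^2" using pos(3) by (intro mult_left_mono det_uv) simp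
  also have "\<dots> = qform a b c u * qform a b c v - (bform a b c u v)^2"
    by (rule qform_mult_qform_minus_bform_sq[symmetric])
  also have "\<dots> \<le> 140 * (\<epsilon> + \<epsilon>) * (\<Sigma> / 2 + 1)^4 * (norm v)^4"
    unfolding \<Sigma>_def
    by (rule dalembert_qform_defect_bound[OF taylor qform_nonneg[OF pos] product uv(4,3) v_small])
      (use \<epsilon> in simp_all)
  also have "\<dots> = 280 * \<epsilon> * (\<Sigma> / 2 + 1)^4 * (norm v)^4" by simp
  finally have "3/16 * (a * c - b^2) * (norm v)^4 \<le> 280 * \<epsilon> * (\<Sigma> / 2 + 1)^4 * (norm v)^4" .
  moreover have "0 < (norm v)^4" using \<open>v \<noteq> 0\<close> by simp
  ultimately show False
    using \<epsilon>(5) by simp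
qed

lemma exists_small_parameter:
  fixes d K e :: real
  assumes "0 < d" "1 \<le> K" "0 < e"
  obtains \<epsilon> where "0 < \<epsilon>" "\<epsilon> \<le> 1" "2 * \<epsilon> * e < d" "\<epsilon> * K < 2" "280 * \<epsilon> * K^4 < 3/16 * d"
proof
  define \<epsilon> where "\<epsilon> = min (1/2) (min (d / (4 * e)) (min (1 / K) (d / (2000 * K^4))))"
  show "0 < \<epsilon>" "\<epsilon> \<le> 1" unfolding \<epsilon>_def using assms by simp_all
  have "\<epsilon> * e \<le> d / (4 * e) * e"
    unfolding \<epsilon>_def using assms by (intro mult_right_mono) auto
  then show "2 * \<epsilon> * e < d" using assms by (simp add: field_simps)
  have "\<epsilon> * K \<le> 1 / K * K" unfolding \<epsilon>_def using assms by (intro mult_right_mono) auto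
  then show "\<epsilon> * K < 2" using assms by simp
  have "\<epsilon> * K^4 \<le> d / (2000 * K^4) * K^4"
    unfolding \<epsilon>_def by (intro mult_right_mono) auto
  then show "280 * \<epsilon> * K^4 < 3/16 * d" using assms by simp
qed

lemma three_term_relation_trivial_near_0:
  fixes \<kappa> :: "real^2 \<Rightarrow> real" and a b c :: real
  assumes even: "\<And>z. \<kappa> (-z) = \<kappa> z" and "\<kappa> 0 = 1"
    and pos: "0 < a" "0 < c" "0 < a * c - b^2"
    and taylor: "\<forall>\<eta>>0. \<exists>r>0. \<forall>z. norm z < r \<longrightarrow> \<bar>\<kappa> z - 1 + qform a b c z / 2\<bar> \<le> \<eta> * (norm z)^2"
  obtains \<delta> where "\<delta> > 0"
    "\<And>x y c1 c2 c3. det2 x y \<noteq> 0 \<Longrightarrow> (\<And>w. w \<in> {x, y, y - x} \<Longrightarrow> norm w < \<delta>) \<Longrightarrow>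
       (\<And>t. c1 * \<kappa> t + c2 * \<kappa> (t - x) + c3 * \<kappa> (t - y) = 0) \<Longrightarrow> c1 = 0 \<and> c2 = 0 \<and> c3 = 0"
proof -
  have "0 < a * c - b^2" "1 \<le> (\<bar>a\<bar> + 2 * \<bar>b\<bar> + \<bar>c\<bar>) / 2 + 1" "0 < a + c"
    using pos by simp_all
  then obtain \<epsilon> where \<epsilon>: "0 < \<epsilon>" "\<epsilon> \<le> 1" "2 * \<epsilon> * (a + c) < a * c - b^2"
    "\<epsilon> * ((\<bar>a\<bar> + 2 * \<bar>b\<bar> + \<bar>c\<bar>) / 2 + 1) < 2"
    "280 * \<epsilon> * ((\<bar>a\<bar> + 2 * \<bar>b\<bar> + \<bar>c\<bar>) / 2 + 1)^4 < 3/16 * (a * c - b^2)"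
    by (rule exists_small_parameter)
  obtain r where "r > 0"
    and r: "\<And>z. norm z < r \<Longrightarrow> \<bar>\<kappa> z - 1 + qform a b c z / 2\<bar> \<le> \<epsilon> * (norm z)^2"
    using taylor \<open>0 < \<epsilon>\<close> by blast
  have small: "norm w < r / 3 \<and> (norm w)^2 < \<epsilon> / 2"
    if "norm w < min (r / 3) (sqrt (\<epsilon> / 2))" for w :: "real^2"
  proof -
    have "(norm w)^2 < (sqrt (\<epsilon> / 2))^2" using that by (intro power_strict_mono) auto
    then show ?thesis using that \<open>0 < \<epsilon>\<close> by simp
  qed
  show ?thesis
  proof (rule that)
    show "0 < min (r / 3) (sqrt (\<epsilon> / 2))" using \<open>r > 0\<close> \<open>0 < \<epsilon>\<close> by simp
    fix x y c1 c2 c3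
    assume "det2 x y \<noteq> 0" and w: "\<And>w. w \<in> {x, y, y - x} \<Longrightarrow> norm w < min (r / 3) (sqrt (\<epsilon> / 2))"
      and rel: "\<And>t. c1 * \<kappa> t + c2 * \<kappa> (t - x) + c3 * \<kappa> (t - y) = 0"
    have "norm w < r / 3 \<and> (norm w)^2 < \<epsilon> / 2" if "w \<in> {x, y, y - x}" for w
      using small w[OF that] by blast
    then show "c1 = 0 \<and> c2 = 0 \<and> c3 = 0"
      using three_term_relation_trivial_on_small_triangles[where r = r, OF even \<open>\<kappa> 0 = 1\<close> pos r \<epsilon>
          \<open>det2 x y \<noteq> 0\<close> _ rel] by blast
  qed
qed

lemma assumption_A_kernel_relation_trivial:
  fixes \<kappa> :: "real^2 \<Rightarrow> real"
  assumes "assumption_A \<kappa>" and even: "\<And>z. \<kappa> (-z) = \<kappa> z" and "\<kappa> 0 = 1"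
  obtains \<delta> where "\<delta> > 0"
    "\<And>(s :: 3 \<Rightarrow> real^2) (c :: real^3). \<not> collinear (range s) \<Longrightarrow> (\<forall>i j. dist (s i) (s j) < \<delta>) \<Longrightarrow>
       (\<And>t. (\<Sum>i\<in>UNIV. c$i * \<kappa> (s i - t)) = 0) \<Longrightarrow> c = 0"
proof -
  obtain a b d where pos: "0 < a" "0 < d" "0 < a * d - b^2" and taylor:
      "\<forall>\<eta>>0. \<exists>r>0. \<forall>z. norm z < r \<longrightarrow> \<bar>\<kappa> z - \<kappa> 0 + qform a b d z / 2\<bar> \<le> \<eta> * (norm z)^2"
    by (rule assumption_A_quadratic_taylor[of \<kappa>, OF assms(1) even])
  obtain \<delta> where "\<delta> > 0" and trivial: "\<And>x y c1 c2 c3. det2 x y \<noteq> 0 \<Longrightarrow>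
      (\<And>w. w \<in> {x, y, y - x} \<Longrightarrow> norm w < \<delta>) \<Longrightarrow>
      (\<And>t. c1 * \<kappa> t + c2 * \<kappa> (t - x) + c3 * \<kappa> (t - y) = 0) \<Longrightarrow> c1 = 0 \<and> c2 = 0 \<and> c3 = 0"
    using three_term_relation_trivial_near_0[OF even \<open>\<kappa> 0 = 1\<close> pos taylor[unfolded \<open>\<kappa> 0 = 1\<close>]]
    by blast
  show ?thesis
  proof (rule that[OF \<open>\<delta> > 0\<close>])
    fix s :: "3 \<Rightarrow> real^2" and c :: "real^3"
    assume "\<not> collinear (range s)" and small: "\<forall>i j. dist (s i) (s j) < \<delta>"
      and rel: "\<And>t. (\<Sum>i\<in>UNIV. c$i * \<kappa> (s i - t)) = 0"
    have "range s = {s 1, s 2, s 3}" by (simp add: UNIV_3)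
    then have "det2 (s 1 - s 2) (s 1 - s 3) \<noteq> 0"
      using \<open>\<not> collinear (range s)\<close> det2_eq_0_imp_collinear[of "s 1" "s 2" "s 3"] by argo
    moreover have "norm w < \<delta>" if "w \<in> {s 1 - s 2, s 1 - s 3, (s 1 - s 3) - (s 1 - s 2)}" for w
      using that small unfolding dist_norm by auto
    moreover have "c$1 * \<kappa> t + c$2 * \<kappa> (t - (s 1 - s 2)) + c$3 * \<kappa> (t - (s 1 - s 3)) = 0" for t
      using rel[of "s 1 - t"] by (simp add: sum_3 algebra_simps)
    ultimately have "c$1 = 0 \<and> c$2 = 0 \<and> c$3 = 0"
      by (rule trivial)
    then show "c = 0" by (simp add: vec_eq_iff forall_3)
  qed
qed

section \<open>Singular covariance matrices\<close>

lemma integrable_mult_of_square_integrable: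
  fixes f g :: "'a \<Rightarrow> real"
  assumes "f \<in> borel_measurable M" "g \<in> borel_measurable M"
    and "integrable M (\<lambda>\<omega>. (f \<omega>)^2)" "integrable M (\<lambda>\<omega>. (g \<omega>)^2)"
  shows "integrable M (\<lambda>\<omega>. f \<omega> * g \<omega>)"
proof (rule Bochner_Integration.integrable_bound[of _ "\<lambda>\<omega>. (f \<omega>)^2 + (g \<omega>)^2"])
  show "AE \<omega> in M. norm (f \<omega> * g \<omega>) \<le> norm ((f \<omega>)^2 + (g \<omega>)^2)"
  proof (rule AE_I2)
    fix \<omega>
    have "2 * \<bar>f \<omega> * g \<omega>\<bar> \<le> (f \<omega>)^2 + (g \<omega>)^2"
      using zero_le_power2[of "\<bar>f \<omega>\<bar> - \<bar>g \<omega>\<bar>"] unfolding power2_diff by (simp add: abs_mult)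
    then show "norm (f \<omega> * g \<omega>) \<le> norm ((f \<omega>)^2 + (g \<omega>)^2)" by simp
  qed
qed (use assms in simp_all)

lemma singular_covariance_imp_kernel_relation:
  fixes \<Psi> :: "'t::ab_group_add \<Rightarrow> 'a \<Rightarrow> real" and \<kappa> :: "'t \<Rightarrow> real" and s :: "'i::finite \<Rightarrow> 't"
  assumes meas: "\<And>t. \<Psi> t \<in> borel_measurable M"
    and mean: "\<And>t. integral\<^sup>L M (\<Psi> t) = 0"
    and sq: "\<And>t. integral\<^sup>L M (\<lambda>\<omega>. (\<Psi> t \<omega>)^2) = 1"
    and cov: "\<And>s t. integral\<^sup>L M (\<lambda>\<omega>. \<Psi> s \<omega> * \<Psi> t \<omega>) = \<kappa> (s - t)"
    and "det (covariance_matrix M (\<lambda>i. \<Psi> (s i))) = 0"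
  obtains c :: "real^'i" where "c \<noteq> 0" "\<And>t. (\<Sum>i\<in>UNIV. c$i * \<kappa> (s i - t)) = 0"
proof -
  have prod_int: "integrable M (\<lambda>\<omega>. \<Psi> s \<omega> * \<Psi> t \<omega>)" for s t
    using integrable_mult_of_square_integrable[OF meas meas] sq not_integrable_integral_eq
    by (metis zero_neq_one)
  define C where "C = covariance_matrix M (\<lambda>i. \<Psi> (s i))"
  have "rank C < CARD('i)" using assms(5) det_eq_0_rank unfolding C_def by blast
  then obtain c :: "real^'i" where "c \<noteq> 0" and "C *v c = 0"
    using matrix_nonfull_linear_equations_eq[of C] by auto
  \<comment> \<open>\<open>Z\<close> is orthogonal to every \<open>\<Psi> (s j)\<close>, hence to itself, so it vanishes almost surely.\<close>
  define Z where "Z \<omega> = (\<Sum>i\<in>UNIV. c$i * \<Psi> (s i) \<omega>)" for \<omega>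
  have Z_Psi: "(\<lambda>\<omega>. Z \<omega> * \<Psi> t \<omega>) = (\<lambda>\<omega>. \<Sum>i\<in>UNIV. c$i * (\<Psi> (s i) \<omega> * \<Psi> t \<omega>))" for t
    unfolding Z_def by (simp add: sum_distrib_right mult.assoc)
  have Z_Psi_int: "integrable M (\<lambda>\<omega>. Z \<omega> * \<Psi> t \<omega>)"
    and Z_Psi_integral: "integral\<^sup>L M (\<lambda>\<omega>. Z \<omega> * \<Psi> t \<omega>) = (\<Sum>i\<in>UNIV. c$i * \<kappa> (s i - t))" for t
    unfolding Z_Psi using prod_int by (simp_all add: integral_sum cov)
  have "integral\<^sup>L M (\<lambda>\<omega>. Z \<omega> * \<Psi> (s j) \<omega>) = (C *v c) $ j" for j
  proof -
    have "C $ j $ i = \<kappa> (s i - s j)" for i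
      using cov[of "s j" "s i"] cov[of "s i" "s j"]
      unfolding C_def covariance_matrix_def by (simp add: mean mult.commute)
    then show ?thesis
      unfolding Z_Psi_integral matrix_vector_mult_def by (simp add: mult.commute)
  qed
  moreover have Z_sq: "(\<lambda>\<omega>. (Z \<omega>)^2) = (\<lambda>\<omega>. \<Sum>j\<in>UNIV. c$j * (Z \<omega> * \<Psi> (s j) \<omega>))"
  proof
    fix \<omega>
    have "(Z \<omega>)^2 = Z \<omega> * (\<Sum>j\<in>UNIV. c$j * \<Psi> (s j) \<omega>)"
      by (simp add: power2_eq_square Z_def)
    then show "(Z \<omega>)^2 = (\<Sum>j\<in>UNIV. c$j * (Z \<omega> * \<Psi> (s j) \<omega>))"
      by (simp add: sum_distrib_left mult_ac)
  qed
  ultimately have "integral\<^sup>L M (\<lambda>\<omega>. (Z \<omega>)^2) = 0"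
    using \<open>C *v c = 0\<close> Z_Psi_int by (simp add: integral_sum)
  moreover have "integrable M (\<lambda>\<omega>. (Z \<omega>)^2)"
    unfolding Z_sq using Z_Psi_int by simp
  ultimately have "AE \<omega> in M. Z \<omega> = 0"
    using integral_nonneg_eq_0_iff_AE[of M "\<lambda>\<omega>. (Z \<omega>)^2"] by simp
  then have "integral\<^sup>L M (\<lambda>\<omega>. Z \<omega> * \<Psi> t \<omega>) = integral\<^sup>L M (\<lambda>\<omega>. 0)" for t
    using meas by (intro integral_cong_AE) (auto simp: Z_def)
  then show ?thesis
    using that[OF \<open>c \<noteq> 0\<close>] Z_Psi_integral by simp
qed

theorem proposition3p5:
  fixes M :: "'a measure" and \<Psi> :: "real^2 \<Rightarrow> 'a \<Rightarrow> real" and \<kappa> :: "real^2 \<Rightarrow> real"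
  assumes "prob_space M"
    and "gaussian_field M \<Psi>"
    and "\<And>s. integral\<^sup>L M (\<Psi> s) = 0"
    and "\<And>s. integral\<^sup>L M (\<lambda>\<omega>. (\<Psi> s \<omega>)\<^sup>2) = 1"
    and "\<And>s t. integral\<^sup>L M (\<lambda>\<omega>. \<Psi> s \<omega> * \<Psi> t \<omega>) = \<kappa> (s - t)"
    and "assumption_A \<kappa>"
  shows "\<exists>\<delta>>0. \<forall>s :: 3 \<Rightarrow> real^2.
           inj s \<and> \<not> collinear (range s) \<and> (\<forall>i j. dist (s i) (s j) < \<delta>) \<longrightarrow>
           nondegenerate_gaussian_vector M (\<lambda>i. \<Psi> (s i))"
proof -
  have meas: "\<And>t. \<Psi> t \<in> borel_measurable M" using assms(2) unfolding gaussian_field_def by blast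
  have even: "\<kappa> (- z) = \<kappa> z" for z using assms(5)[of 0 z] assms(5)[of z 0] by (simp add: mult.commute)
  have "\<kappa> 0 = 1" using assms(4)[of 0] assms(5)[of 0 0] by (simp add: power2_eq_square)
  obtain \<delta> where "\<delta> > 0" and trivial: "\<And>(s :: 3 \<Rightarrow> real^2) (c :: real^3). \<not> collinear (range s) \<Longrightarrow>
      (\<forall>i j. dist (s i) (s j) < \<delta>) \<Longrightarrow> (\<And>t. (\<Sum>i\<in>UNIV. c$i * \<kappa> (s i - t)) = 0) \<Longrightarrow> c = 0"
    using assumption_A_kernel_relation_trivial[OF assms(6) even \<open>\<kappa> 0 = 1\<close>] by blast
  have "nondegenerate_gaussian_vector M (\<lambda>i. \<Psi> (s i))"
    if "\<not> collinear (range s)" "\<forall>i j. dist (s i) (s j) < \<delta>" for s :: "3 \<Rightarrow> real^2"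
  proof (unfold nondegenerate_gaussian_vector_def, rule notI)
    assume "det (covariance_matrix M (\<lambda>i. \<Psi> (s i))) = 0"
    then obtain c :: "real^3" where "c \<noteq> 0" and "\<And>t. (\<Sum>i\<in>UNIV. c$i * \<kappa> (s i - t)) = 0"
      using singular_covariance_imp_kernel_relation[of \<Psi> M \<kappa> s, OF meas assms(3-5)] by blast
    then show False using trivial[OF that] by blast
  qed
  then show ?thesis using \<open>\<delta> > 0\<close> by blast
qed

end
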